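(* Let $m_1,m_2\ge 1$ be integers and let $s_1,s_2\in\{+1,-1\}$. Let $$|\mathscr{G}_1\rangle=\tfrac{1}{\sqrt2}\Big(|0\rangle\textstyle\bigotimes_{k=2}^{2m_1}|i^1_k\rangle+s_1\,|1\rangle\bigotimes_{k=2}^{2m_1}|\bar i^1_k\rangle\Big),\qquad |\mathscr{G}_2\rangle=\tfrac{1}{\sqrt2}\Big(|0\rangle\textstyle\bigotimes_{k=2}^{2m_2}|i^2_k\rangle+s_2\,|1\rangle\bigotimes_{k=2}^{2m_2}|\bar i^2_k\rangle\Big)$$ be a $2m_1$-qubit and a $2m_2$-qubit state, with all $i^h_k\in\{0,1\}$, and consider the product state $|\mathscr{G}_1\rangle\otimes|\mathscr{G}_2\rangle$. Call "part 1" and "part 2" the first $m_1$ and the last $m_1$ qubits of $|\mathscr{G}_1\rangle$, and "part 3" and "part 4" the first $m_2$ and the last $m_2$ qubits of $|\mathscr{G}_2\rangle$. Perform a projective measurement in the GHZ basis (the Bell basis when $m_1=m_2=1$) on the $(m_1+m_2)$-qubit register formed by parts 1 and 3 (ordered: part 1 then part 3), or alternatively on the register formed by parts 1 and 4 (ordered: part 1 then part 4). Let $|\mathcal{G}_a\rangle$ denote the obtained measurement outcome (a GHZ basis state) and $|\mathcal{G}_b\rangle$ the state into which the remaining $m_1+m_2$ qubits (parts 2 and 4 in the first case, ordered part 2 then part 4; parts 2 and 3 in the second case, ordered part 2 then part 3) collapse. Suppose the following two conditions hold: (1) either for both $h=1,2$ the string $0i^h_2i^h_3\cdots i^h_{m_h}$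 equals $i^h_{m_h+1}i^h_{m_h+2}\cdots i^h_{2m_h}$, or for both $h=1,2$ the string $0i^h_2i^h_3\cdots i^h_{m_h}$ equals $\bar i^h_{m_h+1}\bar i^h_{m_h+2}\cdots \bar i^h_{2m_h}$; (2) $s_1=s_2$ (both states carry the same sign in front of their second term). Then $|\mathcal{G}_a\rangle$ and $|\mathcal{G}_b\rangle$ are the same state (for every measurement outcome); otherwise (if the conditions fail) they are different.
   Context: Qubits have computational basis $|0\rangle,|1\rangle$; for a bit $b$, $\bar b=1-b$ denotes its negation. For $N\ge 2$ qubits, the GHZ basis is the orthonormal basis of $N$-qubit states $\frac{1}{\sqrt2}\big(|0\,b_2b_3\cdots b_N\rangle\pm|1\,\bar b_2\bar b_3\cdots\bar b_N\rangle\big)$, $b_2,\dots,b_N\in\{0,1\}$; for $N=2$ these are the four Bell states $\frac1{\sqrt2}(|00\rangle\pm|11\rangle)$, $\frac1{\sqrt2}(|01\rangle\pm|10\rangle)$, and the measurement is then called a Bell measurement. "Same state" means equal as quantum states (up to a global phase). *)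

theory Defs
  imports Complex_Main
begin

text \<open>Qubit states: an N-qubit state is a function from bit strings (bool lists,
  False = 0, True = 1, first list element = first qubit) to complex amplitudes,
  supported on strings of length N.\<close>

type_synonym qstate = "bool list \<Rightarrow> complex"

definition ket :: "bool list \<Rightarrow> qstate" where
  "ket a = (\<lambda>zs. if zs = a then 1 else 0)"

definition tensor :: "nat \<Rightarrow> qstate \<Rightarrow> qstate \<Rightarrow> qstate" where
  "tensor n u v = (\<lambda>zs. u (take n zs) * v (drop n zs))"

definition ghz_state :: "bool list \<Rightarrow> real \<Rightarrow> qstate" where
  "ghz_state a s = (\<lambda>zs. (ket a zs + complex_of_real s * ket (map Not a) zs) / complex_of_real (sqrt 2))"

definition ghz_basis :: "nat \<Rightarrow> qstate set" where
  "ghz_basis N = {ghz_state (False # bs) \<sigma> | bs \<sigma>. length bs = N - 1 \<and> \<sigma> \<in> {1, -1}}"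

definition vnorm :: "nat \<Rightarrow> qstate \<Rightarrow> real" where
  "vnorm n v = sqrt (\<Sum>xs\<in>{xs. length xs = n}. (cmod (v xs))\<^sup>2)"

definition normalize_state :: "nat \<Rightarrow> qstate \<Rightarrow> qstate" where
  "normalize_state n v = (\<lambda>xs. v xs / complex_of_real (vnorm n v))"

definition same_state :: "qstate \<Rightarrow> qstate \<Rightarrow> bool" where
  "same_state u v \<longleftrightarrow> (\<exists>c. cmod c = 1 \<and> (\<forall>xs. u xs = c * v xs))"

text \<open>Partial projection of a total state psi onto the k-qubit register state phi:
  the (unnormalised) post-measurement state of the remaining qubits.
  merge xs ys reassembles the full bit string from the register bits xs
  and the remaining bits ys.\<close>
definition partial_proj ::
  "nat \<Rightarrow> (bool list \<Rightarrow> bool list \<Rightarrow> bool list) \<Rightarrow> qstate \<Rightarrow> qstate \<Rightarrow> qstate" where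
  "partial_proj k merge phi psi =
     (\<lambda>ys. \<Sum>xs\<in>{xs. length xs = k}. cnj (phi xs) * psi (merge xs ys))"

text \<open>Full string = part1 @ part2 @ part3 @ part4 (lengths m1, m1, m2, m2).
  Register (part1, part3), rest (part2, part4):\<close>
definition merge_13 :: "nat \<Rightarrow> bool list \<Rightarrow> bool list \<Rightarrow> bool list" where
  "merge_13 m1 xs ys = take m1 xs @ take m1 ys @ drop m1 xs @ drop m1 ys"

text \<open>Register (part1, part4), rest (part2, part3):\<close>
definition merge_14 :: "nat \<Rightarrow> bool list \<Rightarrow> bool list \<Rightarrow> bool list" where
  "merge_14 m1 xs ys = take m1 xs @ take m1 ys @ drop m1 ys @ drop m1 xs"

end

theory Submission
  imports Defs
begin

(* Split each factor into halves of equal length, a1 @ a2 and b1 @ b2, and the outcome into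
  c1 @ c2.  The projection vanishes unless c1 is a1 or its complement, and likewise c2 and b1.
  Since complementing a GHZ state with sign s only multiplies it by s, both factors may be
  rewritten so that c1 = a1 and c2 = b1; then the remaining qubits are left, up to a scalar, in
  the GHZ state on a2 @ b2 with sign sigma * s1 * s2.  That equals the outcome up to phase iff
  a2 @ b2 is c or its complement and s1 = s2, which is the stated condition.  Measuring parts 1
  and 4 is the same as measuring parts 1 and 3 after swapping the halves of the second factor.
  That the leading bits are 0 plays no role. *)

lemma Not_comp_Not [simp]: "Not \<circ> Not = id"
  by auto

lemma map_Not_map_Not [simp]: "map Not (map Not u) = u"
  by simp

lemma map_Not_eq_map_Not_iff [simp]: "map Not u = map Not v \<longleftrightarrow> u = v"
  by (metis map_Not_map_Not)

lemma eq_map_Not_commute: "u = map Not v \<longleftrightarrow> v = map Not u"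
  by auto

lemma ket_self [simp]: "ket u u = 1"
  by (simp add: ket_def)

lemma ket_append:
  "length u = length v \<Longrightarrow> ket (u @ u') (v @ v') = ket u v * ket u' v'"
  by (auto simp: ket_def)

lemma ket_map_Not_self [simp]:
  "u \<noteq> [] \<Longrightarrow> ket (map Not u) u = 0"
  "u \<noteq> [] \<Longrightarrow> ket u (map Not u) = 0"
  by (cases u; simp add: ket_def)+

lemma ghz_state_append:
  "length u = length v \<Longrightarrow> ghz_state (u @ u') s (v @ v') =
     (ket u v * ket u' v' + complex_of_real s * (ket (map Not u) v * ket (map Not u') v'))
       / complex_of_real (sqrt 2)"
  by (simp add: ghz_state_def ket_append)

lemma ghz_state_self:
  "d \<noteq> [] \<Longrightarrow> ghz_state d s d = 1 / complex_of_real (sqrt 2)"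
  "d \<noteq> [] \<Longrightarrow> ghz_state d s (map Not d) = complex_of_real s / complex_of_real (sqrt 2)"
  by (simp_all add: ghz_state_def)

lemma ghz_state_eq_0: "zs \<noteq> a \<Longrightarrow> zs \<noteq> map Not a \<Longrightarrow> ghz_state a s zs = 0"
  by (simp add: ghz_state_def ket_def)

lemma ghz_state_eq_0_if_length_neq: "length zs \<noteq> length a \<Longrightarrow> ghz_state a s zs = 0"
  by (metis ghz_state_eq_0 length_map)

lemma ghz_state_append_eq_0:
  assumes "length u = length a" and "u \<noteq> a" and "u \<noteq> map Not a"
  shows "ghz_state (a @ b) s (u @ y) = 0" and "ghz_state (a @ b) s (map Not u @ y) = 0"
  using assms by (auto intro!: ghz_state_eq_0 dest: sym[where s = "map Not _"])

lemma ghz_state_append_head: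
  assumes "a \<noteq> []"
  shows "ghz_state (a @ b) s (a @ y) = ket b y / complex_of_real (sqrt 2)"
    and "ghz_state (a @ b) s (map Not a @ y) =
           complex_of_real s * ket (map Not b) y / complex_of_real (sqrt 2)"
  using assms by (simp_all add: ghz_state_append)

lemma ghz_state_swap_halves:
  "length y = length a \<Longrightarrow> length u = length b \<Longrightarrow>
     ghz_state (a @ b) s (y @ u) = ghz_state (b @ a) s (u @ y)"
  by (simp add: ghz_state_append)

lemma ghz_state_map_Not:
  assumes "s \<in> {1, -1}"
  shows "ghz_state (map Not a) s = (\<lambda>zs. complex_of_real s * ghz_state a s zs)"
proof -
  have "s = 1 \<or> s = -1" using assms by simp
  then show ?thesis by (elim disjE) (simp_all add: ghz_state_def fun_eq_iff field_simps)
qed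

lemma ghz_state_append_realign:
  assumes "u = a \<or> u = map Not a" and "s \<in> {1, -1}"
  obtains v k where "ghz_state (a @ b) s = (\<lambda>zs. k * ghz_state (u @ v) s zs)" and "cmod k = 1"
    and "length v = length b" and "a = b \<longleftrightarrow> v = u" and "a = map Not b \<longleftrightarrow> v = map Not u"
proof (cases "u = a")
  case True
  then show ?thesis by (intro that[where v = b and k = 1]) auto
next
  case False
  with assms(1) have u: "u = map Not a" by simp
  have "ghz_state (a @ b) s = (\<lambda>zs. complex_of_real s * ghz_state (u @ map Not b) s zs)"
    using ghz_state_map_Not[OF assms(2), of "u @ map Not b"] by (simp add: u)
  moreover have "cmod (complex_of_real s) = 1" using assms(2) by auto
  ultimately show ?thesis by (intro that[where v = "map Not b" and k = "complex_of_real s"]) (auto simp: u)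
qed

lemma of_real_sqrt2_mult_self: "complex_of_real (sqrt 2) * complex_of_real (sqrt 2) = 2"
  by (simp flip: of_real_mult)

lemma same_state_mult_right:
  assumes "cmod w = 1"
  shows "same_state u (\<lambda>xs. w * v xs) \<longleftrightarrow> same_state u v"
proof
  assume "same_state u (\<lambda>xs. w * v xs)"
  then obtain c where "cmod c = 1" "\<forall>xs. u xs = c * (w * v xs)"
    by (auto simp: same_state_def)
  then show "same_state u v"
    unfolding same_state_def using assms by (intro exI[of _ "c * w"]) (simp add: norm_mult)
next
  assume "same_state u v"
  then obtain c where "cmod c = 1" "\<forall>xs. u xs = c * v xs"
    by (auto simp: same_state_def)
  moreover have "w \<noteq> 0" using assms by auto
  ultimately show "same_state u (\<lambda>xs. w * v xs)"
    unfolding same_state_def using assms by (intro exI[of _ "c / w"]) (simp add: norm_divide)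
qed

lemma same_state_ghz_state_same_support:
  assumes "c \<noteq> []"
  shows "same_state (ghz_state c \<sigma>) (ghz_state c \<tau>) \<longleftrightarrow> \<tau> = \<sigma>"
proof
  assume "same_state (ghz_state c \<sigma>) (ghz_state c \<tau>)"
  then obtain w where w: "\<And>xs. ghz_state c \<sigma> xs = w * ghz_state c \<tau> xs"
    by (auto simp: same_state_def)
  have "w = 1" using w[of c] assms by (simp add: ghz_state_self)
  then show "\<tau> = \<sigma>" using w[of "map Not c"] assms by (simp add: ghz_state_self)
next
  assume "\<tau> = \<sigma>"
  then show "same_state (ghz_state c \<sigma>) (ghz_state c \<tau>)"
    unfolding same_state_def by (intro exI[of _ 1]) simp
qed

lemma same_state_ghz_state_iff:
  assumes "c \<noteq> []" and "\<tau> \<in> {1, -1}"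
  shows "same_state (ghz_state c \<sigma>) (ghz_state d \<tau>) \<longleftrightarrow> (d = c \<or> d = map Not c) \<and> \<tau> = \<sigma>"
proof (cases "d = c \<or> d = map Not c")
  case True
  then have "same_state (ghz_state c \<sigma>) (ghz_state d \<tau>) \<longleftrightarrow> same_state (ghz_state c \<sigma>) (ghz_state c \<tau>)"
    using assms(2) same_state_mult_right[of "complex_of_real \<tau>"]
    by (auto simp: ghz_state_map_Not)
  with True show ?thesis using same_state_ghz_state_same_support[OF assms(1)] by simp
next
  case False
  then have "ghz_state d \<tau> c = 0" by (metis ghz_state_eq_0 map_Not_map_Not)
  moreover have "ghz_state c \<sigma> c \<noteq> 0" using assms(1) by (simp add: ghz_state_self)
  ultimately have "\<not> same_state (ghz_state c \<sigma>) (ghz_state d \<tau>)"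
    unfolding same_state_def by (metis mult_zero_right)
  with False show ?thesis by blast
qed

lemma norm_ghz_state_sq:
  assumes "d \<noteq> []" and "\<tau> \<in> {1, -1}"
  shows "(cmod (ghz_state d \<tau> xs))\<^sup>2 = (if xs \<in> {d, map Not d} then 1 / 2 else 0)"
proof -
  have "cmod (complex_of_real \<tau>) = 1" using assms(2) by auto
  then have "(cmod (ghz_state d \<tau> xs))\<^sup>2 = 1 / 2" if "xs \<in> {d, map Not d}"
    using that assms(1) by (auto simp: ghz_state_self norm_divide power_divide)
  then show ?thesis by (simp add: ghz_state_eq_0)
qed

lemma vnorm_mult_ghz_state:
  assumes "length d = n" and "d \<noteq> []" and "\<tau> \<in> {1, -1}"
  shows "vnorm n (\<lambda>xs. k * ghz_state d \<tau> xs) = cmod k"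
proof -
  let ?S = "{xs :: bool list. length xs = n}" and ?D = "{d, map Not d}"
  have "finite ?S" using finite_lists_length_eq[of "UNIV :: bool set"] by simp
  have "card ?D = 2" using assms(2) by (cases d) auto
  have "(\<Sum>xs\<in>?S. (cmod (k * ghz_state d \<tau> xs))\<^sup>2)
      = (\<Sum>xs\<in>?S. if xs \<in> ?D then (cmod k)\<^sup>2 / 2 else 0)"
    unfolding norm_mult power_mult_distrib norm_ghz_state_sq[OF assms(2,3)] by (intro sum.cong) auto
  also have "\<dots> = (\<Sum>xs\<in>?S \<inter> ?D. (cmod k)\<^sup>2 / 2)"
    by (rule sum.inter_restrict[symmetric]) fact
  also have "?S \<inter> ?D = ?D" using assms(1) by auto
  also have "(\<Sum>xs\<in>?D. (cmod k)\<^sup>2 / 2) = (cmod k)\<^sup>2" using \<open>card ?D = 2\<close> by simp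
  finally show ?thesis by (simp add: vnorm_def)
qed

lemma normalize_state_mult_ghz_state:
  assumes "k \<noteq> 0" and "length d = n" and "d \<noteq> []" and "\<tau> \<in> {1, -1}"
  shows "normalize_state n (\<lambda>xs. k * ghz_state d \<tau> xs) = (\<lambda>xs. (k / cmod k) * ghz_state d \<tau> xs)"
  using assms by (simp add: normalize_state_def vnorm_mult_ghz_state)

lemma same_state_normalize_mult_ghz_state:
  assumes "k \<noteq> 0" and "length d = n" and "d \<noteq> []" and "c \<noteq> []" and "\<tau> \<in> {1, -1}"
  shows "same_state (ghz_state c \<sigma>) (normalize_state n (\<lambda>xs. k * ghz_state d \<tau> xs))
    \<longleftrightarrow> (d = c \<or> d = map Not c) \<and> \<tau> = \<sigma>"
proof -
  have "cmod (k / cmod k) = 1" using assms(1) by (simp add: norm_divide)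
  then have "same_state (ghz_state c \<sigma>) (normalize_state n (\<lambda>xs. k * ghz_state d \<tau> xs))
      \<longleftrightarrow> same_state (ghz_state c \<sigma>) (ghz_state d \<tau>)"
    unfolding normalize_state_mult_ghz_state[OF assms(1,2,3,5)] by (rule same_state_mult_right)
  also have "\<dots> \<longleftrightarrow> (d = c \<or> d = map Not c) \<and> \<tau> = \<sigma>"
    by (rule same_state_ghz_state_iff[OF assms(4,5)])
  finally show ?thesis .
qed

lemma tensor_append: "length u = n \<Longrightarrow> tensor n f g (u @ v) = f u * g v"
  by (simp add: tensor_def)

lemma tensor_mult:
  "tensor n (\<lambda>zs. v * f zs) (\<lambda>zs. w * g zs) = (\<lambda>zs. (v * w) * tensor n f g zs)"
  by (simp add: tensor_def mult_ac)

lemma tensor_ghz_state_eq_0_if_length_neq: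
  "length zs \<noteq> length a + length b \<Longrightarrow> tensor (length a) (ghz_state a s) (ghz_state b t) zs = 0"
  by (cases "length zs < length a") (simp_all add: tensor_def ghz_state_eq_0_if_length_neq)

lemma partial_proj_ghz_state:
  assumes "length c = k" and "c \<noteq> []"
  shows "partial_proj k merge (ghz_state c \<sigma>) psi ys =
    (psi (merge c ys) + complex_of_real \<sigma> * psi (merge (map Not c) ys)) / complex_of_real (sqrt 2)"
proof -
  let ?S = "{xs :: bool list. length xs = k}" and ?r = "complex_of_real (sqrt 2)"
  have "finite ?S" using finite_lists_length_eq[of "UNIV :: bool set"] by simp
  moreover have "c \<noteq> map Not c" using assms(2) by (cases c) auto
  then have "cnj (ghz_state c \<sigma> xs) * psi (merge xs ys) =
      (if xs = c then psi (merge c ys) / ?r else 0)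
      + (if xs = map Not c then complex_of_real \<sigma> * psi (merge (map Not c) ys) / ?r else 0)" for xs
    by (auto simp: ghz_state_def ket_def)
  ultimately show ?thesis
    using assms(1) by (simp add: partial_proj_def sum.distrib add_divide_distrib)
qed

lemma partial_proj_mult:
  "partial_proj k merge phi (\<lambda>zs. w * psi zs) = (\<lambda>ys. w * partial_proj k merge phi psi ys)"
  by (simp add: partial_proj_def sum_distrib_left mult_ac)

lemma length_merge_13 [simp]: "length (merge_13 m xs ys) = length xs + length ys"
  by (simp add: merge_13_def)

lemma merge_13_append:
  "length u1 = m \<Longrightarrow> length y1 = m \<Longrightarrow> merge_13 m (u1 @ u2) (y1 @ y2) = u1 @ y1 @ u2 @ y2"
  by (simp add: merge_13_def)

lemma partial_proj_merge_13_append: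
  assumes "length c1 = m1" and "length c2 = m2" and "c1 \<noteq> []" and "length y1 = m1"
  shows "partial_proj (m1 + m2) (merge_13 m1) (ghz_state (c1 @ c2) \<sigma>) (tensor (2 * m1) G1 G2) (y1 @ y2) =
    (G1 (c1 @ y1) * G2 (c2 @ y2) + complex_of_real \<sigma> * (G1 (map Not c1 @ y1) * G2 (map Not c2 @ y2)))
      / complex_of_real (sqrt 2)"
  using assms by (simp add: partial_proj_ghz_state merge_13_append tensor_def)

lemma partial_proj_merge_13_eq_0_if_length_neq:
  assumes "length ys \<noteq> m1 + m2" and "length a = 2 * m1" and "length b = 2 * m2"
  shows "partial_proj (m1 + m2) (merge_13 m1) phi (tensor (2 * m1) (ghz_state a s) (ghz_state b t)) ys = 0"
proof -
  have "tensor (length a) (ghz_state a s) (ghz_state b t) (merge_13 m1 xs ys) = 0"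
    if "length xs = m1 + m2" for xs
    using that assms by (intro tensor_ghz_state_eq_0_if_length_neq) simp
  then show ?thesis using assms(2) by (simp add: partial_proj_def)
qed

lemma partial_proj_merge_13_aligned:
  assumes "length a1 = m1" and "length a2 = m1" and "length b1 = m2" and "length b2 = m2"
    and "a1 \<noteq> []" and "b1 \<noteq> []"
  shows "partial_proj (m1 + m2) (merge_13 m1) (ghz_state (a1 @ b1) \<sigma>)
      (tensor (2 * m1) (ghz_state (a1 @ a2) s1) (ghz_state (b1 @ b2) s2))
    = (\<lambda>ys. 1 / 2 * ghz_state (a2 @ b2) (\<sigma> * s1 * s2) ys)"
proof
  fix ys :: "bool list"
  let ?r = "complex_of_real (sqrt 2)"
  show "partial_proj (m1 + m2) (merge_13 m1) (ghz_state (a1 @ b1) \<sigma>)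
      (tensor (2 * m1) (ghz_state (a1 @ a2) s1) (ghz_state (b1 @ b2) s2)) ys
    = 1 / 2 * ghz_state (a2 @ b2) (\<sigma> * s1 * s2) ys"
  proof (cases "length ys = m1 + m2")
    case True
    define y1 y2 where "y1 = take m1 ys" and "y2 = drop m1 ys"
    have ys: "ys = y1 @ y2" and "length y1 = m1" using True by (simp_all add: y1_def y2_def)
    have "(ket a2 y1 / ?r * (ket b2 y2 / ?r)
          + complex_of_real \<sigma> * (complex_of_real s1 * ket (map Not a2) y1 / ?r
              * (complex_of_real s2 * ket (map Not b2) y2 / ?r))) / ?r
        = 1 / 2 * ((ket a2 y1 * ket b2 y2 + complex_of_real (\<sigma> * s1 * s2)
              * (ket (map Not a2) y1 * ket (map Not b2) y2)) / ?r)"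
      by (simp add: field_simps of_real_sqrt2_mult_self)
    then show ?thesis
      unfolding ys using assms \<open>length y1 = m1\<close>
      by (simp add: partial_proj_merge_13_append ghz_state_append_head ghz_state_append)
  next
    case False
    then show ?thesis
      using assms by (simp add: partial_proj_merge_13_eq_0_if_length_neq ghz_state_eq_0_if_length_neq)
  qed
qed

lemma partial_proj_merge_13_eq_0:
  assumes "length a1 = m1" and "length a2 = m1" and "length b1 = m2" and "length b2 = m2"
    and "length c1 = m1" and "length c2 = m2" and "c1 \<noteq> []"
    and "\<not> ((c1 = a1 \<or> c1 = map Not a1) \<and> (c2 = b1 \<or> c2 = map Not b1))"
  shows "partial_proj (m1 + m2) (merge_13 m1) (ghz_state (c1 @ c2) \<sigma>)
      (tensor (2 * m1) (ghz_state (a1 @ a2) s1) (ghz_state (b1 @ b2) s2)) = (\<lambda>_. 0)"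
proof
  fix ys :: "bool list"
  show "partial_proj (m1 + m2) (merge_13 m1) (ghz_state (c1 @ c2) \<sigma>)
      (tensor (2 * m1) (ghz_state (a1 @ a2) s1) (ghz_state (b1 @ b2) s2)) ys = 0"
  proof (cases "length ys = m1 + m2")
    case True
    define y1 y2 where "y1 = take m1 ys" and "y2 = drop m1 ys"
    have ys: "ys = y1 @ y2" and "length y1 = m1" using True by (simp_all add: y1_def y2_def)
    have "ghz_state (a1 @ a2) s1 (c1 @ y1) = 0 \<and> ghz_state (a1 @ a2) s1 (map Not c1 @ y1) = 0
      \<or> ghz_state (b1 @ b2) s2 (c2 @ y2) = 0 \<and> ghz_state (b1 @ b2) s2 (map Not c2 @ y2) = 0"
      using assms ghz_state_append_eq_0 by metis
    then show ?thesis
      unfolding ys using assms \<open>length y1 = m1\<close> by (auto simp: partial_proj_merge_13_append)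
  next
    case False
    then show ?thesis using assms by (simp add: partial_proj_merge_13_eq_0_if_length_neq)
  qed
qed

lemma same_state_post_measurement_merge_13:
  fixes a1 a2 b1 b2 c :: "bool list"
  assumes len: "length a1 = m1" "length a2 = m1" "length b1 = m2" "length b2 = m2"
      "length c = m1 + m2"
    and "m1 \<ge> 1" and "m2 \<ge> 1"
    and signs: "s1 \<in> {1, -1}" "s2 \<in> {1, -1}" "\<sigma> \<in> {1, -1}"
    and nonzero: "partial_proj (m1 + m2) (merge_13 m1) (ghz_state c \<sigma>)
      (tensor (2 * m1) (ghz_state (a1 @ a2) s1) (ghz_state (b1 @ b2) s2)) \<noteq> (\<lambda>_. 0)"
  shows "same_state (ghz_state c \<sigma>) (normalize_state (m1 + m2) (partial_proj (m1 + m2) (merge_13 m1)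
      (ghz_state c \<sigma>) (tensor (2 * m1) (ghz_state (a1 @ a2) s1) (ghz_state (b1 @ b2) s2))))
    \<longleftrightarrow> (a1 = a2 \<and> b1 = b2 \<or> a1 = map Not a2 \<and> b1 = map Not b2) \<and> s1 = s2"
proof -
  define c1 c2 where "c1 = take m1 c" and "c2 = drop m1 c"
  have c: "c = c1 @ c2" "length c1 = m1" "length c2 = m2"
    using len(5) by (simp_all add: c1_def c2_def)
  have "c1 \<noteq> []" and "c2 \<noteq> []" using c(2,3) \<open>m1 \<ge> 1\<close> \<open>m2 \<ge> 1\<close> by auto
  have "(c1 = a1 \<or> c1 = map Not a1) \<and> (c2 = b1 \<or> c2 = map Not b1)"
    using partial_proj_merge_13_eq_0[OF len(1-4) c(2,3) \<open>c1 \<noteq> []\<close>] nonzero c(1) by blast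
  then have "c1 = a1 \<or> c1 = map Not a1" and "c2 = b1 \<or> c2 = map Not b1" by simp_all
  obtain a2' k1 where
      a: "ghz_state (a1 @ a2) s1 = (\<lambda>zs. k1 * ghz_state (c1 @ a2') s1 zs)" "cmod k1 = 1"
        "length a2' = length a2" "a1 = a2 \<longleftrightarrow> a2' = c1" "a1 = map Not a2 \<longleftrightarrow> a2' = map Not c1"
    by (rule ghz_state_append_realign[OF \<open>c1 = a1 \<or> c1 = map Not a1\<close> signs(1)])
  obtain b2' k2 where
      b: "ghz_state (b1 @ b2) s2 = (\<lambda>zs. k2 * ghz_state (c2 @ b2') s2 zs)" "cmod k2 = 1"
        "length b2' = length b2" "b1 = b2 \<longleftrightarrow> b2' = c2" "b1 = map Not b2 \<longleftrightarrow> b2' = map Not c2"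
    by (rule ghz_state_append_realign[OF \<open>c2 = b1 \<or> c2 = map Not b1\<close> signs(2)])
  let ?k = "k1 * k2 / 2" and ?\<tau> = "\<sigma> * s1 * s2"
  have post: "partial_proj (m1 + m2) (merge_13 m1) (ghz_state c \<sigma>)
      (tensor (2 * m1) (ghz_state (a1 @ a2) s1) (ghz_state (b1 @ b2) s2))
    = (\<lambda>ys. ?k * ghz_state (a2' @ b2') ?\<tau> ys)"
    unfolding a(1) b(1) tensor_mult partial_proj_mult c(1)
    using partial_proj_merge_13_aligned[OF c(2) _ c(3) _ \<open>c1 \<noteq> []\<close> \<open>c2 \<noteq> []\<close>] a(3) b(3) len
    by simp
  have "?k \<noteq> 0" using a(2) b(2) by auto
  moreover have "length (a2' @ b2') = m1 + m2" and "a2' @ b2' \<noteq> []"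
    using a(3) b(3) len \<open>m1 \<ge> 1\<close> by auto
  moreover have "?\<tau> \<in> {1, -1}" using signs by auto
  ultimately have "same_state (ghz_state c \<sigma>) (normalize_state (m1 + m2) (partial_proj (m1 + m2)
      (merge_13 m1) (ghz_state c \<sigma>) (tensor (2 * m1) (ghz_state (a1 @ a2) s1) (ghz_state (b1 @ b2) s2))))
    \<longleftrightarrow> (a2' @ b2' = c \<or> a2' @ b2' = map Not c) \<and> ?\<tau> = \<sigma>"
    unfolding post using \<open>c1 \<noteq> []\<close> c(1) by (intro same_state_normalize_mult_ghz_state) simp_all
  also have "a2' @ b2' = c \<longleftrightarrow> a2' = c1 \<and> b2' = c2"
    using a(3) len(2) c by (simp add: append_eq_append_conv)
  also have "a2' @ b2' = map Not c \<longleftrightarrow> a2' = map Not c1 \<and> b2' = map Not c2"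
    using a(3) len(2) c by (simp add: append_eq_append_conv)
  also have "?\<tau> = \<sigma> \<longleftrightarrow> s1 = s2"
    using signs by auto
  finally show ?thesis by (simp only: a(4,5) b(4,5))
qed

lemma length_merge_14 [simp]: "length (merge_14 m xs ys) = length xs + length ys"
  by (simp add: merge_14_def)

lemma partial_proj_merge_14_eq_merge_13:
  assumes "length a = 2 * m1" and "length b1 = m2" and "length b2 = m2"
  shows "partial_proj (m1 + m2) (merge_14 m1) phi (tensor (2 * m1) (ghz_state a s1) (ghz_state (b1 @ b2) s2))
    = partial_proj (m1 + m2) (merge_13 m1) phi (tensor (2 * m1) (ghz_state a s1) (ghz_state (b2 @ b1) s2))"
  unfolding partial_proj_def
proof (intro ext sum.cong refl)
  fix ys xs :: "bool list"
  assume "xs \<in> {xs. length xs = m1 + m2}"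
  then have xs: "length xs = m1 + m2" by simp
  show "cnj (phi xs) * tensor (2 * m1) (ghz_state a s1) (ghz_state (b1 @ b2) s2) (merge_14 m1 xs ys)
    = cnj (phi xs) * tensor (2 * m1) (ghz_state a s1) (ghz_state (b2 @ b1) s2) (merge_13 m1 xs ys)"
  proof (cases "length ys = m1 + m2")
    case True
    let ?p = "take m1 xs @ take m1 ys"
    have "merge_14 m1 xs ys = ?p @ drop m1 ys @ drop m1 xs"
      and "merge_13 m1 xs ys = ?p @ drop m1 xs @ drop m1 ys"
      by (simp_all add: merge_14_def merge_13_def)
    moreover have "ghz_state (b1 @ b2) s2 (drop m1 ys @ drop m1 xs)
        = ghz_state (b2 @ b1) s2 (drop m1 xs @ drop m1 ys)"
      using True xs assms by (intro ghz_state_swap_halves) simp_all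
    ultimately show ?thesis
      using True xs by (simp only: tensor_append length_append length_take)
  next
    case False
    then show ?thesis
      using xs assms tensor_ghz_state_eq_0_if_length_neq[of _ a] by simp
  qed
qed

theorem theorem1:
  fixes m1 m2 :: nat and s1 s2 :: real and x1 x2 :: "bool list"
    and merge :: "bool list \<Rightarrow> bool list \<Rightarrow> bool list" and phi :: qstate
  assumes "m1 \<ge> 1" and "m2 \<ge> 1"
    and "s1 \<in> {1, -1}" and "s2 \<in> {1, -1}"
    and "length x1 = 2 * m1 - 1" and "length x2 = 2 * m2 - 1"
    and "merge = merge_13 m1 \<or> merge = merge_14 m1"
    and "phi \<in> ghz_basis (m1 + m2)"
    and "partial_proj (m1 + m2) merge phi
           (tensor (2 * m1) (ghz_state (False # x1) s1) (ghz_state (False # x2) s2)) \<noteq> (\<lambda>_. 0)"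
  shows "same_state phi
           (normalize_state (m1 + m2) (partial_proj (m1 + m2) merge phi
              (tensor (2 * m1) (ghz_state (False # x1) s1) (ghz_state (False # x2) s2))))
         \<longleftrightarrow>
         (((take m1 (False # x1) = drop m1 (False # x1)
             \<and> take m2 (False # x2) = drop m2 (False # x2))
          \<or> (take m1 (False # x1) = map Not (drop m1 (False # x1))
             \<and> take m2 (False # x2) = map Not (drop m2 (False # x2))))
          \<and> s1 = s2)"
proof -
  obtain c \<sigma> where phi: "phi = ghz_state c \<sigma>" and "length c = m1 + m2" and "\<sigma> \<in> {1, -1}"
    using assms(1,8) unfolding ghz_basis_def by auto
  let ?a1 = "take m1 (False # x1)" and ?a2 = "drop m1 (False # x1)"
    and ?b1 = "take m2 (False # x2)" and ?b2 = "drop m2 (False # x2)"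
  have len: "length ?a1 = m1" "length ?a2 = m1" "length ?b1 = m2" "length ?b2 = m2"
    using assms(1,2,5,6) by auto
  from assms(7) show ?thesis
  proof
    assume "merge = merge_13 m1"
    then show ?thesis
      using same_state_post_measurement_merge_13[OF len \<open>length c = m1 + m2\<close> assms(1-4) \<open>\<sigma> \<in> {1, -1}\<close>]
        assms(9)
      unfolding phi append_take_drop_id by blast
  next
    assume "merge = merge_14 m1"
    moreover have "length (False # x1) = 2 * m1" using assms(1,5) by simp
    ultimately show ?thesis
      using same_state_post_measurement_merge_13[OF len(1,2,4,3) \<open>length c = m1 + m2\<close> assms(1-4) \<open>\<sigma> \<in> {1, -1}\<close>]
        partial_proj_merge_14_eq_merge_13[OF _ len(3,4)] assms(9)
      unfolding phi append_take_drop_id by (auto simp: eq_map_Not_commute)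
  qed
qed

end
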